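(* Let $(a_{ij})_{i,j=1}^s$, $(b_i)_{i=1}^s$ be the coefficients of an $s$-stage Runge–Kutta scheme with all $b_i\neq 0$, and set $c_i=\sum_{j}a_{ij}$, $d_j=\sum_i b_i a_{ij}$. Assume the simplifying assumption $D(1)$ holds, i.e. $d_j=b_j(1-c_j)$ for all $j=1,\dots,s$. (i) If the scheme satisfies the classical order conditions up to order three, then it satisfies the additional order-three condition $\sum_i \frac{d_i^2}{b_i}=\frac13$. (ii) If the scheme satisfies the classical order conditions up to order four, then it satisfies, in addition, the additional order-four conditions $$\sum_i c_i\frac{d_i^2}{b_i}=\frac1{12},\quad \sum_i\frac{d_i^3}{b_i^2}=\frac14,\quad \sum_{i,j}\frac{b_i}{b_j}c_i a_{ij}d_j=\frac5{24},\quad \sum_{i,j}\frac{d_i}{b_j}a_{ij}d_j=\frac18.$$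
   Context: All sums run from $1$ to $s$. The classical order conditions (for an ODE $y'=f(y)$) up to order four are: $\sum b_i=1$; $\sum d_i=\frac12$; $\sum c_id_i=\frac16$, $\sum b_ic_i^2=\frac13$; $\sum b_ic_i^3=\frac14$, $\sum b_ic_ia_{ij}c_j=\frac18$, $\sum d_ic_i^2=\frac1{12}$, $\sum d_ia_{ij}c_j=\frac1{24}$. The "additional order conditions" are the extra conditions (due to Hager and Bonnans–Laurent-Varin) needed so that the Runge–Kutta discretization of an optimal control problem, in which the state is discretized with $(a_{ij},b_i)$ and the adjoint state with the scheme $\hat b_i=b_i$, $\hat a_{ij}=b_j-\frac{b_j}{b_i}a_{ji}$ (so that discretization and optimization commute), attains the corresponding order. *)

theory Defs
  imports Complex_Main
begin

definition rk_c :: "nat \<Rightarrow> (nat \<Rightarrow> nat \<Rightarrow> real) \<Rightarrow> nat \<Rightarrow> real" where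
  "rk_c s a i = (\<Sum>j=1..s. a i j)"

definition rk_d :: "nat \<Rightarrow> (nat \<Rightarrow> nat \<Rightarrow> real) \<Rightarrow> (nat \<Rightarrow> real) \<Rightarrow> nat \<Rightarrow> real" where
  "rk_d s a b j = (\<Sum>i=1..s. b i * a i j)"

definition classical_order3 :: "nat \<Rightarrow> (nat \<Rightarrow> nat \<Rightarrow> real) \<Rightarrow> (nat \<Rightarrow> real) \<Rightarrow> bool" where
  "classical_order3 s a b \<longleftrightarrow>
     (\<Sum>i=1..s. b i) = 1 \<and>
     (\<Sum>i=1..s. rk_d s a b i) = 1/2 \<and>
     (\<Sum>i=1..s. rk_c s a i * rk_d s a b i) = 1/6 \<and>
     (\<Sum>i=1..s. b i * (rk_c s a i)^2) = 1/3"

definition classical_order4 :: "nat \<Rightarrow> (nat \<Rightarrow> nat \<Rightarrow> real) \<Rightarrow> (nat \<Rightarrow> real) \<Rightarrow> bool" where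
  "classical_order4 s a b \<longleftrightarrow>
     classical_order3 s a b \<and>
     (\<Sum>i=1..s. b i * (rk_c s a i)^3) = 1/4 \<and>
     (\<Sum>i=1..s. \<Sum>j=1..s. b i * rk_c s a i * a i j * rk_c s a j) = 1/8 \<and>
     (\<Sum>i=1..s. rk_d s a b i * (rk_c s a i)^2) = 1/12 \<and>
     (\<Sum>i=1..s. \<Sum>j=1..s. rk_d s a b i * a i j * rk_c s a j) = 1/24"

definition simplifying_D1 :: "nat \<Rightarrow> (nat \<Rightarrow> nat \<Rightarrow> real) \<Rightarrow> (nat \<Rightarrow> real) \<Rightarrow> bool" where
  "simplifying_D1 s a b \<longleftrightarrow>
     (\<forall>j\<in>{1..s}. rk_d s a b j = b j * (1 - rk_c s a j))"

end

theory Submission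
  imports Defs
begin

text \<open>Under D(1) every quotient \<open>d\<^sub>j / b\<^sub>j\<close> equals \<open>1 - c\<^sub>j\<close>, so each additional sum collapses
  to a linear combination of classical sums (the last two after also using \<open>\<Sum>\<^sub>j a\<^sub>i\<^sub>j = c\<^sub>i\<close>),
  and the classical order conditions fix its value. In particular D(1) turns
  \<open>\<Sum> d\<^sub>i = 1/2\<close> into \<open>\<Sum> b\<^sub>i c\<^sub>i = 1/2\<close>.\<close>

lemma rk_d_D1:
  assumes "simplifying_D1 s a b" and "j \<in> {1..s}"
  shows "rk_d s a b j = b j * (1 - rk_c s a j)"
  using assms by (simp add: simplifying_D1_def)

lemma rk_d_div_b:
  assumes "simplifying_D1 s a b" and "j \<in> {1..s}" and "b j \<noteq> 0"
  shows "rk_d s a b j / b j = 1 - rk_c s a j"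
  using assms by (simp add: rk_d_D1)

lemma sum_rk_d_D1:
  assumes "simplifying_D1 s a b"
  shows "(\<Sum>i=1..s. rk_d s a b i) = (\<Sum>i=1..s. b i) - (\<Sum>i=1..s. b i * rk_c s a i)"
proof -
  have "(\<Sum>i=1..s. rk_d s a b i) = (\<Sum>i=1..s. b i - b i * rk_c s a i)"
    using assms by (intro sum.cong) (auto simp: rk_d_D1 algebra_simps)
  then show ?thesis by (simp add: sum_subtractf)
qed

lemma sum_a_rk_d_div_b:
  assumes "simplifying_D1 s a b" and "\<forall>j\<in>{1..s}. b j \<noteq> 0"
  shows "(\<Sum>j=1..s. a i j * rk_d s a b j / b j) = rk_c s a i - (\<Sum>j=1..s. a i j * rk_c s a j)"
proof -
  have "(\<Sum>j=1..s. a i j * rk_d s a b j / b j) = (\<Sum>j=1..s. a i j - a i j * rk_c s a j)"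
    using assms by (intro sum.cong) (auto simp: rk_d_div_b algebra_simps simp flip: times_divide_eq_right)
  then show ?thesis by (simp add: sum_subtractf rk_c_def)
qed

lemma sum_rk_d_sq_div_b_D1:
  assumes "simplifying_D1 s a b" and "\<forall>i\<in>{1..s}. b i \<noteq> 0"
  shows "(\<Sum>i=1..s. (rk_d s a b i)^2 / b i)
       = (\<Sum>i=1..s. b i) - 2 * (\<Sum>i=1..s. b i * rk_c s a i) + (\<Sum>i=1..s. b i * (rk_c s a i)^2)"
proof -
  have "(\<Sum>i=1..s. (rk_d s a b i)^2 / b i)
      = (\<Sum>i=1..s. b i - 2 * (b i * rk_c s a i) + b i * (rk_c s a i)^2)"
    using assms by (intro sum.cong) (auto simp: rk_d_D1 field_simps power2_eq_square)
  then show ?thesis by (simp add: sum.distrib sum_subtractf sum_distrib_left)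
qed

lemma sum_c_rk_d_sq_div_b_D1:
  assumes "simplifying_D1 s a b" and "\<forall>i\<in>{1..s}. b i \<noteq> 0"
  shows "(\<Sum>i=1..s. rk_c s a i * (rk_d s a b i)^2 / b i)
       = (\<Sum>i=1..s. b i * rk_c s a i) - 2 * (\<Sum>i=1..s. b i * (rk_c s a i)^2)
         + (\<Sum>i=1..s. b i * (rk_c s a i)^3)"
proof -
  have "(\<Sum>i=1..s. rk_c s a i * (rk_d s a b i)^2 / b i)
      = (\<Sum>i=1..s. b i * rk_c s a i - 2 * (b i * (rk_c s a i)^2) + b i * (rk_c s a i)^3)"
    using assms
    by (intro sum.cong) (auto simp: rk_d_D1 field_simps power2_eq_square power3_eq_cube)
  then show ?thesis by (simp add: sum.distrib sum_subtractf sum_distrib_left)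
qed

lemma sum_rk_d_cube_div_b_sq_D1:
  assumes "simplifying_D1 s a b" and "\<forall>i\<in>{1..s}. b i \<noteq> 0"
  shows "(\<Sum>i=1..s. (rk_d s a b i)^3 / (b i)^2)
       = (\<Sum>i=1..s. b i) - 3 * (\<Sum>i=1..s. b i * rk_c s a i)
         + 3 * (\<Sum>i=1..s. b i * (rk_c s a i)^2) - (\<Sum>i=1..s. b i * (rk_c s a i)^3)"
proof -
  have "(\<Sum>i=1..s. (rk_d s a b i)^3 / (b i)^2)
      = (\<Sum>i=1..s. b i - 3 * (b i * rk_c s a i) + 3 * (b i * (rk_c s a i)^2) - b i * (rk_c s a i)^3)"
    using assms
    by (intro sum.cong) (auto simp: rk_d_D1 field_simps power2_eq_square power3_eq_cube)
  then show ?thesis by (simp add: sum.distrib sum_subtractf sum_distrib_left)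
qed

lemma sum_b_c_a_rk_d_div_b_D1:
  assumes "simplifying_D1 s a b" and "\<forall>j\<in>{1..s}. b j \<noteq> 0"
  shows "(\<Sum>i=1..s. \<Sum>j=1..s. b i / b j * rk_c s a i * a i j * rk_d s a b j)
       = (\<Sum>i=1..s. b i * (rk_c s a i)^2)
         - (\<Sum>i=1..s. \<Sum>j=1..s. b i * rk_c s a i * a i j * rk_c s a j)"
proof -
  have "(\<Sum>j=1..s. b i / b j * rk_c s a i * a i j * rk_d s a b j)
      = b i * rk_c s a i * (\<Sum>j=1..s. a i j * rk_d s a b j / b j)" for i
    by (simp add: sum_distrib_left mult_ac)
  also have "\<dots> i = b i * (rk_c s a i)^2 - (\<Sum>j=1..s. b i * rk_c s a i * a i j * rk_c s a j)" for i
    unfolding sum_a_rk_d_div_b[OF assms]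
    by (simp add: right_diff_distrib sum_distrib_left power2_eq_square mult_ac)
  finally show ?thesis by (simp add: sum_subtractf)
qed

lemma sum_rk_d_a_rk_d_div_b_D1:
  assumes "simplifying_D1 s a b" and "\<forall>j\<in>{1..s}. b j \<noteq> 0"
  shows "(\<Sum>i=1..s. \<Sum>j=1..s. rk_d s a b i / b j * a i j * rk_d s a b j)
       = (\<Sum>i=1..s. rk_c s a i * rk_d s a b i)
         - (\<Sum>i=1..s. \<Sum>j=1..s. rk_d s a b i * a i j * rk_c s a j)"
proof -
  have "(\<Sum>j=1..s. rk_d s a b i / b j * a i j * rk_d s a b j)
      = rk_d s a b i * (\<Sum>j=1..s. a i j * rk_d s a b j / b j)" for i
    by (simp add: sum_distrib_left mult_ac)
  also have "\<dots> i = rk_c s a i * rk_d s a b i - (\<Sum>j=1..s. rk_d s a b i * a i j * rk_c s a j)" for i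
    unfolding sum_a_rk_d_div_b[OF assms]
    by (simp add: right_diff_distrib sum_distrib_left mult_ac)
  finally show ?thesis by (simp add: sum_subtractf)
qed

theorem mainTheorem1:
  fixes s :: nat and a :: "nat \<Rightarrow> nat \<Rightarrow> real" and b :: "nat \<Rightarrow> real"
  assumes b_nz: "\<forall>i\<in>{1..s}. b i \<noteq> 0"
    and D1: "simplifying_D1 s a b"
  shows "(classical_order3 s a b \<longrightarrow>
            (\<Sum>i=1..s. (rk_d s a b i)^2 / b i) = 1/3)
       \<and> (classical_order4 s a b \<longrightarrow>
            (\<Sum>i=1..s. rk_c s a i * (rk_d s a b i)^2 / b i) = 1/12 \<and>
            (\<Sum>i=1..s. (rk_d s a b i)^3 / (b i)^2) = 1/4 \<and>
            (\<Sum>i=1..s. \<Sum>j=1..s. b i / b j * rk_c s a i * a i j * rk_d s a b j) = 5/24 \<and>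
            (\<Sum>i=1..s. \<Sum>j=1..s. rk_d s a b i / b j * a i j * rk_d s a b j) = 1/8)"
proof (intro conjI impI)
  have b_c_half: "(\<Sum>i=1..s. b i * rk_c s a i) = 1/2" if "classical_order3 s a b"
    using that sum_rk_d_D1[OF D1] by (simp add: classical_order3_def)
  show "(\<Sum>i=1..s. (rk_d s a b i)^2 / b i) = 1/3" if "classical_order3 s a b"
    using that b_c_half sum_rk_d_sq_div_b_D1[OF D1 b_nz] by (simp add: classical_order3_def)
  assume o4: "classical_order4 s a b"
  then have o3: "classical_order3 s a b" by (simp add: classical_order4_def)
  note order_conds = o4[unfolded classical_order4_def] o3[unfolded classical_order3_def]
    b_c_half[OF o3]
  show "(\<Sum>i=1..s. rk_c s a i * (rk_d s a b i)^2 / b i) = 1/12"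
    using order_conds sum_c_rk_d_sq_div_b_D1[OF D1 b_nz] by simp
  show "(\<Sum>i=1..s. (rk_d s a b i)^3 / (b i)^2) = 1/4"
    using order_conds sum_rk_d_cube_div_b_sq_D1[OF D1 b_nz] by simp
  show "(\<Sum>i=1..s. \<Sum>j=1..s. b i / b j * rk_c s a i * a i j * rk_d s a b j) = 5/24"
    using order_conds sum_b_c_a_rk_d_div_b_D1[OF D1 b_nz] by simp
  show "(\<Sum>i=1..s. \<Sum>j=1..s. rk_d s a b i / b j * a i j * rk_d s a b j) = 1/8"
    using order_conds sum_rk_d_a_rk_d_div_b_D1[OF D1 b_nz] by simp
qed

end
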